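(* Let $X$ be a complex Banach space, $0<\alpha<1$, $T>0$, and let $A$ satisfy Condition (A). Then for all $0\le t\le T$ and $a\in X$, $\lim_{t'\to t}\|G(t')a-G(t)a\|=0$, where $t'\to t$ means $t'\downarrow 0$ if $t=0$ and $t'\uparrow T$ if $t=T$.
   Context: Condition (A) on $A:\mathcal{D}(A)\subset X\to X$: (i) closed, densely defined; (ii) $\Sigma_{\vartheta}:=\{z\in\mathbb{C}\setminus\{0\}:|\arg z|<\vartheta\}\subset\rho(A)$ for some $\vartheta\in(\pi/2,\pi)$; (iii) for every $\epsilon\in(0,\vartheta)$, $\|(\lambda-A)^{-1}\|\le C_\epsilon/|\lambda|$ for $\lambda\in\Sigma_{\vartheta-\epsilon}$; (iv) $0\in\rho(A)$. For $t>0$, $G(t)a:=\frac{1}{2\pi i}\int_{\Gamma}e^{\lambda t}\lambda^{\alpha-1}(\lambda^{\alpha}-A)^{-1}a\,d\lambda$ (principal branches), $\Gamma=\{\rho e^{-i\vartheta}:\rho>1/t\}\cup\{t^{-1}e^{i\theta}:|\theta|\le\vartheta\}\cup\{\rho e^{i\vartheta}:\rho>1/t\}$ oriented from $\infty e^{-i\vartheta}$ to $\infty e^{i\vartheta}$; and $G(0)a:=a$. *)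

theory Defs
  imports "HOL-Analysis.Analysis"
begin

text \<open>A complex Banach space is modelled as a real Banach space of type 'a together with
  a scalar multiplication by complex numbers that extends the real one and is compatible
  with the norm.\<close>

definition complex_scaling :: "(complex \<Rightarrow> 'a::banach \<Rightarrow> 'a) \<Rightarrow> bool" where
  "complex_scaling sc \<longleftrightarrow>
     (\<forall>r x. sc (complex_of_real r) x = r *\<^sub>R x) \<and>
     (\<forall>c x y. sc c (x + y) = sc c x + sc c y) \<and>
     (\<forall>c d x. sc (c + d) x = sc c x + sc d x) \<and>
     (\<forall>c d x. sc c (sc d x) = sc (c * d) x) \<and>
     (\<forall>c x. norm (sc c x) = cmod c * norm x)"

definition lin_op :: "(complex \<Rightarrow> 'a::banach \<Rightarrow> 'a) \<Rightarrow> 'a set \<Rightarrow> ('a \<Rightarrow> 'a) \<Rightarrow> bool" where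
  "lin_op sc D A \<longleftrightarrow>
     0 \<in> D \<and> (\<forall>x\<in>D. \<forall>y\<in>D. x + y \<in> D) \<and> (\<forall>c. \<forall>x\<in>D. sc c x \<in> D) \<and>
     (\<forall>x\<in>D. \<forall>y\<in>D. A (x + y) = A x + A y) \<and> (\<forall>c. \<forall>x\<in>D. A (sc c x) = sc c (A x))"

definition closed_op :: "'a set \<Rightarrow> ('a::banach \<Rightarrow> 'a) \<Rightarrow> bool" where
  "closed_op D A \<longleftrightarrow> closed {(x, A x) | x. x \<in> D}"

definition densely_defined :: "'a::banach set \<Rightarrow> bool" where
  "densely_defined D \<longleftrightarrow> closure D = UNIV"

definition resolvent :: "(complex \<Rightarrow> 'a::banach \<Rightarrow> 'a) \<Rightarrow> 'a set \<Rightarrow> ('a \<Rightarrow> 'a) \<Rightarrow> complex \<Rightarrow> 'a \<Rightarrow> 'a" where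
  "resolvent sc D A l y = (THE x. x \<in> D \<and> sc l x - A x = y)"

definition in_resolvent_set :: "(complex \<Rightarrow> 'a::banach \<Rightarrow> 'a) \<Rightarrow> 'a set \<Rightarrow> ('a \<Rightarrow> 'a) \<Rightarrow> complex \<Rightarrow> bool" where
  "in_resolvent_set sc D A l \<longleftrightarrow>
     (\<forall>y. \<exists>!x. x \<in> D \<and> sc l x - A x = y) \<and>
     (\<exists>C. \<forall>y. norm (resolvent sc D A l y) \<le> C * norm y)"

definition sector :: "real \<Rightarrow> complex set" where
  "sector th = {z. z \<noteq> 0 \<and> \<bar>Arg z\<bar> < th}"

definition condition_A :: "(complex \<Rightarrow> 'a::banach \<Rightarrow> 'a) \<Rightarrow> 'a set \<Rightarrow> ('a \<Rightarrow> 'a) \<Rightarrow> real \<Rightarrow> bool" where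
  "condition_A sc D A th \<longleftrightarrow>
     lin_op sc D A \<and> closed_op D A \<and> densely_defined D \<and>
     pi / 2 < th \<and> th < pi \<and>
     (\<forall>l \<in> sector th. in_resolvent_set sc D A l) \<and>
     (\<forall>e. 0 < e \<and> e < th \<longrightarrow>
        (\<exists>C. \<forall>l \<in> sector (th - e). \<forall>y.
            norm (resolvent sc D A l y) \<le> C / cmod l * norm y)) \<and>
     in_resolvent_set sc D A 0"

definition G_integrand ::
  "(complex \<Rightarrow> 'a::banach \<Rightarrow> 'a) \<Rightarrow> 'a set \<Rightarrow> ('a \<Rightarrow> 'a) \<Rightarrow> real \<Rightarrow> real \<Rightarrow> 'a \<Rightarrow> complex \<Rightarrow> 'a" where
  "G_integrand sc D A al t a l =
     sc (exp (l * complex_of_real t) * l powr (complex_of_real al - 1))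
        (resolvent sc D A (l powr complex_of_real al) a)"

text \<open>G(t)a as the contour integral over Gamma, written out through the parametrisations
  of its three pieces: the ray rho e^(-i th), rho > 1/t (traversed inward), the arc
  t^(-1) e^(i s), |s| \<le> th, and the ray rho e^(i th), rho > 1/t (traversed outward).\<close>

definition G_op ::
  "(complex \<Rightarrow> 'a::banach \<Rightarrow> 'a) \<Rightarrow> 'a set \<Rightarrow> ('a \<Rightarrow> 'a) \<Rightarrow> real \<Rightarrow> real \<Rightarrow> real \<Rightarrow> 'a \<Rightarrow> 'a" where
  "G_op sc D A al th t a =
    (if t = 0 then a else
     sc (1 / (2 * complex_of_real pi * \<i>))
       ( - integral {1/t..} (\<lambda>r. sc (cis (- th))
              (G_integrand sc D A al t a (complex_of_real r * cis (- th))))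
         + integral {-th..th} (\<lambda>s. sc (\<i> * complex_of_real (1/t) * cis s)
              (G_integrand sc D A al t a (complex_of_real (1/t) * cis s)))
         + integral {1/t..} (\<lambda>r. sc (cis th)
              (G_integrand sc D A al t a (complex_of_real r * cis th)))))"

end

(* Substituting lambda = mu / t moves the contour of G(t) to the fixed contour Gamma_1 of radius 1
   and turns the integrand into (e^mu / mu) nu R(nu) a with nu = t^(-alpha) mu^alpha.  Since
   mu^alpha stays in a sector of half-angle alpha theta < theta, where |nu R(nu)| <= C, the integrand
   is dominated by C |a| e^(Re mu), which is integrable along the rays of Gamma_1; the resolvent
   identity makes it Lipschitz in t^(-alpha), so G is continuous at every t > 0.  At t = 0, for d in
   the domain nu R(nu) d - d = R(nu) A d = O(t^alpha), while (2 pi i)^(-1) times the integral of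
   e^mu / mu over Gamma_1 equals 1 (computed from a primitive of (e^z - 1) / z); as the G(t) are
   uniformly bounded and the domain is dense, G(t) a -> a. *)

theory Submission
  imports Defs "HOL-Complex_Analysis.Cauchy_Integral_Theorem" "HOL-Real_Asymp.Real_Asymp"
begin

lemma complex_scaling_bounded_bilinear:
  fixes sc :: "complex \<Rightarrow> 'a::banach \<Rightarrow> 'a"
  assumes "complex_scaling sc"
  shows "bounded_bilinear sc"
proof -
  have r: "\<And>r x. sc (complex_of_real r) x = r *\<^sub>R x"
   and m: "\<And>c d x. sc c (sc d x) = sc (c * d) x"
    using assms unfolding complex_scaling_def by auto
  show ?thesis
  proof
    show "sc (a + a') b = sc a b + sc a' b" "sc a (b + b') = sc a b + sc a b'" for a a' b b'
      using assms unfolding complex_scaling_def by auto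
    show "sc (r *\<^sub>R a) b = r *\<^sub>R sc a b" "sc a (r *\<^sub>R b) = r *\<^sub>R sc a b" for r a b
      by (metis m r mult.commute scaleR_conv_of_real)+
    show "\<exists>K. \<forall>a b. norm (sc a b) \<le> norm a * norm b * K"
      using assms unfolding complex_scaling_def by (intro exI[of _ 1]) simp
  qed
qed

lemma complex_scaling_times: "complex_scaling ((*) :: complex \<Rightarrow> complex \<Rightarrow> complex)"
  unfolding complex_scaling_def by (auto simp: algebra_simps norm_mult scaleR_conv_of_real)

locale complex_space =
  fixes sc :: "complex \<Rightarrow> 'a::banach \<Rightarrow> 'a"
  assumes complex_scaling: "complex_scaling sc"
begin

sublocale scale: bounded_bilinear sc
  using complex_scaling by (rule complex_scaling_bounded_bilinear)

lemma scale_of_real: "sc (complex_of_real r) x = r *\<^sub>R x"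
  and scale_scale: "sc c (sc d x) = sc (c * d) x"
  and norm_scale: "norm (sc c x) = cmod c * norm x"
  using complex_scaling unfolding complex_scaling_def by auto

lemma scale_one: "sc 1 x = x"
  using scale_of_real[of 1 x] by simp

end

lemma ray_integral_exp_decay:
  fixes f :: "real \<Rightarrow> 'b::banach"
  assumes cf: "continuous_on {a..} f" and c: "0 < c"
    and bd: "\<And>x. a \<le> x \<Longrightarrow> norm (f x) \<le> B * exp (- c * x)"
  shows "f integrable_on {a..}" and "norm (integral {a..} f) \<le> B * exp (- c * a) / c"
proof -
  have gi: "((\<lambda>x. B * exp (- c * x)) has_integral (B * (exp (- c * a) / c))) {a..}"
    by (intro has_integral_mult_right has_integral_exp_minus_to_infinity c)
  show fi: "f integrable_on {a..}"
  proof (rule integrable_on_all_intervals_integrable_bound[where g="\<lambda>x. B * exp (- c * x)"])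
    fix u v :: real
    have "{a..} \<inter> cbox u v = {max a u..v}" by auto
    moreover have "f integrable_on {max a u..v}"
      by (rule integrable_continuous_interval) (rule continuous_on_subset[OF cf], auto)
    ultimately show "(\<lambda>x. if x \<in> {a..} then f x else 0) integrable_on cbox u v"
      by (simp only: integrable_restrict_Int)
  next
    show "norm (f x) \<le> B * exp (- c * x)" if "x \<in> {a..}" for x using bd that by auto
    show "(\<lambda>x. B * exp (- c * x)) integrable_on {a..}" using gi by blast
  qed
  have "norm (integral {a..} f) \<le> integral {a..} (\<lambda>x. B * exp (- c * x))"
    using gi fi bd by (intro integral_norm_bound_integral) auto
  also have "\<dots> = B * exp (- c * a) / c" using integral_unique[OF gi] by simp
  finally show "norm (integral {a..} f) \<le> B * exp (- c * a) / c" .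
qed

lemma ray_integral_tendsto:
  fixes f :: "real \<Rightarrow> 'b::banach"
  assumes cf: "continuous_on {a..} f" and c: "0 < c"
    and bd: "\<And>x. a \<le> x \<Longrightarrow> norm (f x) \<le> B * exp (- c * x)"
  shows "((\<lambda>b. integral {a..b} f) \<longlongrightarrow> integral {a..} f) at_top"
proof -
  have tail: "integral {a..} f - integral {a..b} f = integral {b..} f" if b: "a \<le> b" for b
  proof -
    have "(f has_integral integral {a..b} f) {a..b}"
      by (intro integrable_integral integrable_continuous_interval continuous_on_subset[OF cf]) auto
    moreover have "(f has_integral integral {b..} f) {b..}"
      by (intro integrable_integral ray_integral_exp_decay(1)[OF continuous_on_subset[OF cf] c, of b B])
         (use bd b in auto)
    ultimately have "(f has_integral (integral {a..b} f + integral {b..} f)) ({a..b} \<union> {b..})"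
      by (rule has_integral_Un) (use b in \<open>auto intro: negligible_subset[of "{b}"]\<close>)
    moreover have "{a..b} \<union> {b..} = {a..}" using b by auto
    ultimately show ?thesis by (simp add: integral_unique)
  qed
  have "((\<lambda>b. integral {a..} f - integral {a..b} f) \<longlongrightarrow> 0) at_top"
  proof (rule Lim_null_comparison)
    show "\<forall>\<^sub>F b in at_top. norm (integral {a..} f - integral {a..b} f) \<le> B * exp (- c * b) / c"
      using eventually_ge_at_top[of a]
    proof eventually_elim
      case (elim b)
      show ?case unfolding tail[OF elim]
        using ray_integral_exp_decay(2)[OF continuous_on_subset[OF cf] c, of b] bd elim by auto
    qed
    show "((\<lambda>b. B * exp (- c * b) / c) \<longlongrightarrow> 0) at_top" using c by real_asymp
  qed
  from tendsto_diff[OF tendsto_const[of "integral {a..} f"] this] show ?thesis by simp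
qed

lemma ray_integral_stretch:
  fixes f :: "real \<Rightarrow> 'b::banach"
  assumes cf: "continuous_on {a..} f" and c: "0 < c" and m: "0 < m"
    and bd: "\<And>x. a \<le> x \<Longrightarrow> norm (f x) \<le> B * exp (- c * x)"
  shows "integral {a..} f = integral {a/m..} (\<lambda>x. m *\<^sub>R f (m * x))"
proof -
  define g where "g = (\<lambda>x. m *\<^sub>R f (m * x))"
  have cg: "continuous_on {a/m..} g" unfolding g_def
    by (intro continuous_intros continuous_on_compose2[OF cf]) (use m in \<open>auto simp: field_simps\<close>)
  have bg: "norm (g x) \<le> (m * B) * exp (- (c * m) * x)" if "a/m \<le> x" for x
  proof -
    have "a \<le> m * x" using that m by (simp add: field_simps)
    then show ?thesis unfolding g_def using bd[of "m * x"] m by (simp add: mult_left_mono mult_ac)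
  qed
  have finite: "integral {a/m..b} g = integral {a..m * b} f" for b
  proof -
    have "(\<lambda>x. x / m) ` {a..m * b} = {a/m..b}"
      using m by (auto simp: field_simps image_iff intro!: bexI[of _ "m * _"])
    then show ?thesis
      using integral_stretch_real[of m a "m * b" f] m unfolding g_def by simp
  qed
  have "((\<lambda>b. integral {a..m * b} f) \<longlongrightarrow> integral {a..} f) at_top"
    using filterlim_compose[OF ray_integral_tendsto[OF cf c bd], of "\<lambda>b. m * b"] m
    by (simp add: filterlim_tendsto_pos_mult_at_top[OF tendsto_const m filterlim_ident])
  then have "((\<lambda>b. integral {a/m..b} g) \<longlongrightarrow> integral {a..} f) at_top"
    by (simp add: finite)
  moreover have "((\<lambda>b. integral {a/m..b} g) \<longlongrightarrow> integral {a/m..} g) at_top"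
    by (rule ray_integral_tendsto[OF cg _ bg]) (use c m in auto)
  ultimately show ?thesis unfolding g_def by (rule tendsto_unique[OF trivial_limit_at_top_linorder])
qed

definition hankel_set :: "real \<Rightarrow> complex set" where
  "hankel_set th = (\<lambda>r. complex_of_real r * cis th) ` {1..}
     \<union> (\<lambda>r. complex_of_real r * cis (-th)) ` {1..} \<union> cis ` {-th..th}"

definition hankel_integral :: "(complex \<Rightarrow> 'b::banach \<Rightarrow> 'b) \<Rightarrow> real \<Rightarrow> (complex \<Rightarrow> 'b) \<Rightarrow> 'b" where
  "hankel_integral sc th F =
     - integral {1..} (\<lambda>r. sc (cis (-th)) (F (complex_of_real r * cis (-th))))
     + integral {-th..th} (\<lambda>s. sc (\<i> * cis s) (F (cis s)))
     + integral {1..} (\<lambda>r. sc (cis th) (F (complex_of_real r * cis th)))"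

definition hankel_const :: "real \<Rightarrow> real" where
  "hankel_const th = 2 * (exp (cos th) / (- cos th)) + exp 1 * (2 * th)"

lemma hankel_set_rayI:
  "1 \<le> r \<Longrightarrow> complex_of_real r * cis th \<in> hankel_set th"
  "1 \<le> r \<Longrightarrow> complex_of_real r * cis (-th) \<in> hankel_set th"
  unfolding hankel_set_def by auto

lemma hankel_set_arcI: "-th \<le> s \<Longrightarrow> s \<le> th \<Longrightarrow> cis s \<in> hankel_set th"
  unfolding hankel_set_def by auto

lemma hankel_setD:
  assumes z: "z \<in> hankel_set th" and th: "0 < th" "th < pi"
  shows "z \<noteq> 0" "1 \<le> cmod z" "\<bar>Arg z\<bar> \<le> th" "0 \<le> Re z \<or> Im z \<noteq> 0"
proof -
  have sin_th: "sin th > 0" using th by (intro sin_gt_zero) auto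
  consider (upper) r where "r \<ge> 1" "z = complex_of_real r * cis th"
    | (lower) r where "r \<ge> 1" "z = complex_of_real r * cis (-th)"
    | (arc) s where "-th \<le> s" "s \<le> th" "z = cis s"
    using z unfolding hankel_set_def by auto
  then have "z \<noteq> 0 \<and> 1 \<le> cmod z \<and> \<bar>Arg z\<bar> \<le> th \<and> (0 \<le> Re z \<or> Im z \<noteq> 0)"
  proof cases
    case upper
    have "Arg z = th" using upper th by (intro Arg_unique'[of r]) (auto simp: rcis_def)
    then show ?thesis using upper sin_th th by (auto simp: norm_mult)
  next
    case lower
    have "Arg z = -th" using lower th by (intro Arg_unique'[of r]) (auto simp: rcis_def)
    then show ?thesis using lower sin_th th by (auto simp: norm_mult)
  next
    case arc
    have "Arg z = s" unfolding arc(3) by (rule Arg_cis) (use arc th in auto)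
    moreover have "0 \<le> Re z" if "Im z = 0"
    proof -
      have "sin s = 0" "\<bar>s\<bar> < pi" using arc that th by auto
      then have "s = 0" using sin_zero_pi_iff by blast
      then show ?thesis using arc by simp
    qed
    ultimately show ?thesis using arc by auto
  qed
  then show "z \<noteq> 0" "1 \<le> cmod z" "\<bar>Arg z\<bar> \<le> th" "0 \<le> Re z \<or> Im z \<noteq> 0" by auto
qed

locale hankel_contour = complex_space sc for sc :: "complex \<Rightarrow> 'a::banach \<Rightarrow> 'a" +
  fixes th :: real
  assumes th_gt: "pi / 2 < th" and th_lt: "th < pi"
begin

lemma th_pos: "0 < th"
  using th_gt pi_gt_zero by linarith

lemma cos_th_neg: "cos th < 0"
  using th_gt th_lt by (intro cos_lt_zero_pi) auto

lemma hankel_const_nonneg: "0 \<le> hankel_const th"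
proof -
  have "0 \<le> exp (cos th) / (- cos th)" using cos_th_neg by (intro divide_nonneg_pos) auto
  moreover have "0 \<le> exp 1 * (2 * th)" using th_pos by simp
  ultimately show ?thesis unfolding hankel_const_def by linarith
qed

context
  fixes F :: "complex \<Rightarrow> 'a" and B :: real
  assumes cont: "continuous_on (hankel_set th) F"
    and bound: "\<And>\<mu>. \<mu> \<in> hankel_set th \<Longrightarrow> norm (F \<mu>) \<le> B * exp (Re \<mu>)"
begin

lemma hankel_ray_decay:
  assumes ph: "ph = th \<or> ph = -th"
  shows "continuous_on {1..} (\<lambda>r. sc (cis ph) (F (complex_of_real r * cis ph)))"
    and "\<And>r. 1 \<le> r \<Longrightarrow> norm (sc (cis ph) (F (complex_of_real r * cis ph))) \<le> B * exp (- (- cos th) * r)"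
proof -
  have on_ray: "complex_of_real r * cis ph \<in> hankel_set th" if "1 \<le> r" for r
    using ph hankel_set_rayI that by auto
  show "continuous_on {1..} (\<lambda>r. sc (cis ph) (F (complex_of_real r * cis ph)))"
    by (intro scale.continuous_on continuous_on_const continuous_on_compose2[OF cont])
       (auto intro!: continuous_intros on_ray)
  fix r :: real
  assume "1 \<le> r"
  moreover have "cos ph = cos th" using ph by auto
  ultimately show "norm (sc (cis ph) (F (complex_of_real r * cis ph))) \<le> B * exp (- (- cos th) * r)"
    using bound[OF on_ray] by (simp add: norm_scale mult.commute)
qed

lemma hankel_ray_integral:
  assumes ph: "ph = th \<or> ph = -th"
  shows "(\<lambda>r. sc (cis ph) (F (complex_of_real r * cis ph))) integrable_on {1..}"
    and "norm (integral {1..} (\<lambda>r. sc (cis ph) (F (complex_of_real r * cis ph))))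
           \<le> B * (exp (cos th) / (- cos th))"
  using ray_integral_exp_decay[OF hankel_ray_decay(1)[OF ph] _ hankel_ray_decay(2)[OF ph]] cos_th_neg
  by auto

lemma hankel_arc_integral:
  shows "(\<lambda>s. sc (\<i> * cis s) (F (cis s))) integrable_on {-th..th}"
    and "norm (integral {-th..th} (\<lambda>s. sc (\<i> * cis s) (F (cis s)))) \<le> B * exp 1 * (2 * th)"
proof -
  have arc_cont: "continuous_on {-th..th} (\<lambda>s. sc (\<i> * cis s) (F (cis s)))"
    by (intro scale.continuous_on continuous_on_compose2[OF cont])
       (auto intro!: continuous_intros hankel_set_arcI)
  then show "(\<lambda>s. sc (\<i> * cis s) (F (cis s))) integrable_on {-th..th}"
    by (rule integrable_continuous_interval)
  have B: "0 \<le> B"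
  proof -
    have "norm (F 1) \<le> B * exp 1" using bound[OF hankel_set_arcI[of th 0]] th_pos by simp
    then have "0 \<le> B * exp 1" using norm_ge_zero order_trans by blast
    then show ?thesis by (simp add: zero_le_mult_iff)
  qed
  have "norm (integral {-th..th} (\<lambda>s. sc (\<i> * cis s) (F (cis s)))) \<le> B * exp 1 * (th - - th)"
  proof (rule integral_bound[OF _ arc_cont])
    show "- th \<le> th" using th_pos by simp
    fix s assume "s \<in> {-th..th}"
    then have "norm (F (cis s)) \<le> B * exp (cos s)" using bound[OF hankel_set_arcI] by auto
    also have "\<dots> \<le> B * exp 1" using B by (intro mult_left_mono) auto
    finally show "norm (sc (\<i> * cis s) (F (cis s))) \<le> B * exp 1" by (simp add: norm_scale norm_mult)
  qed
  then show "norm (integral {-th..th} (\<lambda>s. sc (\<i> * cis s) (F (cis s)))) \<le> B * exp 1 * (2 * th)"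
    by simp
qed

lemma norm_hankel_integral_le: "norm (hankel_integral sc th F) \<le> B * hankel_const th"
proof -
  have triangle: "norm (- x + y + z) \<le> norm x + norm y + norm z" for x y z :: 'a
    using norm_triangle_ineq[of "- x + y" z] norm_triangle_ineq[of "- x" y] by simp
  have "norm (hankel_integral sc th F)
      \<le> norm (integral {1..} (\<lambda>r. sc (cis (-th)) (F (complex_of_real r * cis (-th)))))
        + norm (integral {-th..th} (\<lambda>s. sc (\<i> * cis s) (F (cis s))))
        + norm (integral {1..} (\<lambda>r. sc (cis th) (F (complex_of_real r * cis th))))"
    unfolding hankel_integral_def by (rule triangle)
  also have "\<dots> \<le> B * (exp (cos th) / (- cos th)) + B * exp 1 * (2 * th) + B * (exp (cos th) / (- cos th))"
    using hankel_ray_integral(2)[of "-th"] hankel_ray_integral(2)[of th] hankel_arc_integral(2)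
    by (intro add_mono) auto
  also have "\<dots> = B * hankel_const th"
    unfolding hankel_const_def by (simp only: distrib_left mult_2 mult.assoc add_ac)
  finally show ?thesis .
qed

end

lemma hankel_integral_diff:
  assumes "continuous_on (hankel_set th) F" "\<And>\<mu>. \<mu> \<in> hankel_set th \<Longrightarrow> norm (F \<mu>) \<le> B * exp (Re \<mu>)"
    and "continuous_on (hankel_set th) G" "\<And>\<mu>. \<mu> \<in> hankel_set th \<Longrightarrow> norm (G \<mu>) \<le> B' * exp (Re \<mu>)"
  shows "hankel_integral sc th F - hankel_integral sc th G = hankel_integral sc th (\<lambda>\<mu>. F \<mu> - G \<mu>)"
  unfolding hankel_integral_def scale.diff_right
  using integral_diff[OF hankel_ray_integral(1)[OF assms(1,2), of "-th"] hankel_ray_integral(1)[OF assms(3,4), of "-th"]]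
    integral_diff[OF hankel_ray_integral(1)[OF assms(1,2), of th] hankel_ray_integral(1)[OF assms(3,4), of th]]
    integral_diff[OF hankel_arc_integral(1)[OF assms(1,2)] hankel_arc_integral(1)[OF assms(3,4)]]
  by (simp add: algebra_simps)

lemma norm_hankel_integral_diff_le:
  assumes "continuous_on (hankel_set th) F" "\<And>\<mu>. \<mu> \<in> hankel_set th \<Longrightarrow> norm (F \<mu>) \<le> B * exp (Re \<mu>)"
    and "continuous_on (hankel_set th) G" "\<And>\<mu>. \<mu> \<in> hankel_set th \<Longrightarrow> norm (G \<mu>) \<le> B' * exp (Re \<mu>)"
    and "\<And>\<mu>. \<mu> \<in> hankel_set th \<Longrightarrow> norm (F \<mu> - G \<mu>) \<le> K * exp (Re \<mu>)"
  shows "norm (hankel_integral sc th F - hankel_integral sc th G) \<le> K * hankel_const th"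
proof -
  have "norm (hankel_integral sc th (\<lambda>\<mu>. F \<mu> - G \<mu>)) \<le> K * hankel_const th"
    using continuous_on_diff[OF assms(1,3)] assms(5) by (rule norm_hankel_integral_le)
  then show ?thesis using hankel_integral_diff[OF assms(1-4)] by simp
qed

lemma hankel_integral_scale_const:
  assumes cont: "continuous_on (hankel_set th) \<phi>"
    and bound: "\<And>\<mu>. \<mu> \<in> hankel_set th \<Longrightarrow> cmod (\<phi> \<mu>) \<le> B * exp (Re \<mu>)"
  shows "hankel_integral sc th (\<lambda>\<mu>. sc (\<phi> \<mu>) d) = sc (hankel_integral (*) th \<phi>) d"
proof -
  interpret scalar: hankel_contour "(*)" th
    using complex_scaling_times th_gt th_lt by unfold_locales
  have pull_out: "integral S (\<lambda>x. sc (k x) (sc (\<phi> (p x)) d)) = sc (integral S (\<lambda>x. k x * \<phi> (p x))) d"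
    if "(\<lambda>x. k x * \<phi> (p x)) integrable_on S" for S k p
    using integral_linear[OF that scale.bounded_linear_left[of d]] by (simp add: o_def scale_scale)
  show ?thesis
    unfolding hankel_integral_def scale.add_left scale.minus_left
    by (simp only: pull_out scalar.hankel_arc_integral(1)[OF cont bound]
        scalar.hankel_ray_integral(1)[OF cont bound disjI1[OF refl]]
        scalar.hankel_ray_integral(1)[OF cont bound disjI2[OF refl]])
qed

end

definition exprel :: "complex \<Rightarrow> complex" where
  "exprel z = (if z = 0 then 1 else (exp z - 1) / z)"

lemma exprel_field_differentiable: "z \<noteq> 0 \<Longrightarrow> exprel field_differentiable at z"
proof -
  assume z: "z \<noteq> 0"
  have "((\<lambda>z. (exp z - 1) / z) has_field_derivative ((exp z * z - (exp z - 1)) / z^2)) (at z)"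
    using z by (auto intro!: derivative_eq_intros simp: power2_eq_square)
  then have "(exprel has_field_derivative ((exp z * z - (exp z - 1)) / z^2)) (at z)"
    by (rule has_field_derivative_transform_within_open[of _ _ z "-{0}"])
       (use z in \<open>auto simp: exprel_def\<close>)
  then show ?thesis unfolding field_differentiable_def by blast
qed

lemma continuous_on_exprel: "continuous_on UNIV exprel"
proof -
  have "isCont exprel z" for z
  proof (cases "z = 0")
    case True
    have "((\<lambda>y. (exp y - 1) / y) \<longlongrightarrow> exprel 0) (at (0::complex))"
      using DERIV_exp[of 0] unfolding has_field_derivative_iff by (simp add: exprel_def)
    then have "(exprel \<longlongrightarrow> exprel 0) (at 0)"
      by (rule Lim_transform_eventually) (simp add: eventually_at_filter exprel_def)
    then show ?thesis using True isCont_def by blast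
  next
    case False
    then show ?thesis by (intro field_differentiable_imp_continuous_at exprel_field_differentiable)
  qed
  then show ?thesis by (simp add: continuous_at_imp_continuous_on)
qed

lemma exprel_primitive:
  obtains P where "\<And>z. (P has_field_derivative exprel z) (at z)"
proof -
  obtain P where "\<And>z. z \<in> UNIV \<Longrightarrow> (P has_field_derivative exprel z) (at z within UNIV)"
    by (rule holomorphic_convex_primitive[of UNIV "{0}" exprel])
       (auto simp: continuous_on_exprel exprel_field_differentiable)
  then have "\<And>z. (P has_field_derivative exprel z) (at z)" by simp
  then show thesis by (rule that)
qed

lemma exp_outer_arc_integral_tendsto:
  assumes th: "pi / 2 < th" "th < pi"
  shows "((\<lambda>b. integral {th..2*pi-th} (\<lambda>s. \<i> * exp (complex_of_real b * cis s))) \<longlongrightarrow> 0) at_top"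
proof (rule Lim_null_comparison)
  have cos_le: "cos s \<le> cos th" if s: "s \<in> {th..2*pi-th}" for s
  proof (cases "s \<le> pi")
    case True
    then show ?thesis using s th by (intro cos_monotone_0_pi_le) auto
  next
    case False
    have "cos s = cos (2*pi - s)" by simp
    also have "\<dots> \<le> cos th" using s th False by (intro cos_monotone_0_pi_le) auto
    finally show ?thesis .
  qed
  show "\<forall>\<^sub>F b in at_top. norm (integral {th..2*pi-th} (\<lambda>s. \<i> * exp (complex_of_real b * cis s)))
          \<le> exp (b * cos th) * (2*pi - th - th)"
    using eventually_ge_at_top[of 0]
  proof eventually_elim
    case (elim b)
    show ?case
    proof (rule integral_bound)
      show "th \<le> 2*pi-th" using th by simp
      show "continuous_on {th..2*pi-th} (\<lambda>s. \<i> * exp (complex_of_real b * cis s))"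
        by (intro continuous_intros)
      show "norm (\<i> * exp (complex_of_real b * cis s)) \<le> exp (b * cos th)" if "s \<in> {th..2*pi-th}" for s
        using mult_left_mono[OF cos_le[OF that] elim] by (simp add: norm_mult)
    qed
  qed
  have "cos th < 0" using th by (intro cos_lt_zero_pi) auto
  then show "((\<lambda>b. exp (b * cos th) * (2*pi - th - th)) \<longlongrightarrow> 0) at_top" by real_asymp
qed

context
  fixes P :: "complex \<Rightarrow> complex"
  assumes P: "\<And>z. (P has_field_derivative exprel z) (at z)"
begin

text \<open>Since \<open>exp z / z = exprel z + 1 / z\<close>, a primitive of \<^const>\<open>exprel\<close> integrates
  \<open>exp z / z\<close> along contours avoiding the origin, up to a logarithmic term.\<close>

lemma exp_div_ray_has_integral:
  assumes "1 \<le> b"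
  shows "((\<lambda>r. cis ph * (exp (complex_of_real r * cis ph) / (complex_of_real r * cis ph)))
           has_integral (P (complex_of_real b * cis ph) - P (cis ph) + ln b)) {1..b}"
proof -
  have "((\<lambda>r. P (complex_of_real r * cis ph) + Ln (complex_of_real r)) has_vector_derivative
          cis ph * (exp (complex_of_real r * cis ph) / (complex_of_real r * cis ph))) (at r within {1..b})"
    if r: "r \<in> {1..b}" for r
  proof -
    have "((\<lambda>z. P (z * cis ph) + Ln z) has_field_derivative
            exprel (complex_of_real r * cis ph) * cis ph + 1 / complex_of_real r) (at (complex_of_real r))"
      using r by (auto intro!: derivative_eq_intros DERIV_chain2[OF P] simp: field_simps)
    from has_vector_derivative_real_field[OF this, of "{1..b}"]
    show ?thesis
      using r by (simp add: exprel_def Ln_of_real field_simps)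
  qed
  then have "((\<lambda>r. cis ph * (exp (complex_of_real r * cis ph) / (complex_of_real r * cis ph)))
      has_integral (P (complex_of_real b * cis ph) + Ln (complex_of_real b))
                   - (P (complex_of_real 1 * cis ph) + Ln (complex_of_real 1))) {1..b}"
    by (rule fundamental_theorem_of_calculus[OF assms])
  moreover have "Ln (complex_of_real b) = complex_of_real (ln b)"
    using assms by (intro Ln_of_real) auto
  ultimately show ?thesis by (simp add: algebra_simps)
qed

lemma exp_arc_has_integral:
  assumes "u \<le> v" and "0 < b"
  shows "((\<lambda>s. \<i> * exp (complex_of_real b * cis s))
           has_integral (P (complex_of_real b * cis v) - P (complex_of_real b * cis u) + \<i> * (v - u))) {u..v}"
proof -
  have "((\<lambda>s. P (complex_of_real b * cis s) + \<i> * s) has_vector_derivative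
          \<i> * exp (complex_of_real b * cis s)) (at s within {u..v})" for s
  proof -
    have "((\<lambda>z. P (complex_of_real b * exp (\<i> * z)) + \<i> * z) has_field_derivative
          exprel (complex_of_real b * cis s) * (complex_of_real b * (cis s * \<i>)) + \<i>) (at (complex_of_real s))"
      by (auto intro!: derivative_eq_intros DERIV_chain2[OF P] simp: cis_conv_exp)
    from has_vector_derivative_real_field[OF this, of "{u..v}"]
    show ?thesis using assms by (simp add: exprel_def field_simps cis_conv_exp)
  qed
  then show ?thesis
    by (rule fundamental_theorem_of_calculus[OF assms(1), of "\<lambda>s. P (complex_of_real b * cis s) + \<i> * s",
          THEN has_integral_eq_rhs]) (simp add: algebra_simps)
qed


lemma exp_div_rays_integral:
  assumes th: "pi / 2 < th" "th < pi"
  shows "integral {1..} (\<lambda>r. cis th * (exp (complex_of_real r * cis th) / (complex_of_real r * cis th)))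
       - integral {1..} (\<lambda>r. cis (-th) * (exp (complex_of_real r * cis (-th)) / (complex_of_real r * cis (-th))))
       = \<i> * (2 * pi - 2 * th) - (P (cis th) - P (cis (-th)))"
proof -
  have c: "0 < - cos th" using th cos_lt_zero_pi[of th] by auto
  define ray where "ray ph r = cis ph * (exp (complex_of_real r * cis ph) / (complex_of_real r * cis ph))"
    for ph r
  define Q where "Q b = P (complex_of_real b * cis th) - P (complex_of_real b * cis (-th))" for b
  define outer where "outer b = integral {th..2*pi-th} (\<lambda>s. \<i> * exp (complex_of_real b * cis s))" for b
  have ray_tendsto: "((\<lambda>b. integral {1..b} (ray ph)) \<longlongrightarrow> integral {1..} (ray ph)) at_top"
    if "cos ph = cos th" for ph
  proof (rule ray_integral_tendsto[OF _ c])
    show "continuous_on {1..} (ray ph)" unfolding ray_def by (intro continuous_intros) auto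
    show "norm (ray ph r) \<le> 1 * exp (- (- cos th) * r)" if "1 \<le> r" for r
      using that \<open>cos ph = cos th\<close>
      by (simp add: ray_def norm_mult norm_divide divide_le_eq mult_le_cancel_left1 mult.commute)
  qed
  have finite_rays: "integral {1..b} (ray th) - integral {1..b} (ray (-th)) = Q b - Q 1" if "1 \<le> b" for b
    using exp_div_ray_has_integral[OF that, of th] exp_div_ray_has_integral[OF that, of "-th"]
    unfolding ray_def[symmetric] Q_def by (simp add: integral_unique)
  have outer: "Q b = \<i> * (2 * pi - 2 * th) - outer b" if "1 \<le> b" for b
  proof -
    have "cis (2*pi-th) = cis (-th)" by (simp add: complex_eq_iff)
    then show ?thesis
      using integral_unique[OF exp_arc_has_integral[of th "2*pi-th" b]] th that
      unfolding Q_def outer_def by (simp add: algebra_simps)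
  qed
  have "((\<lambda>b. \<i> * (2 * pi - 2 * th) - outer b - Q 1) \<longlongrightarrow> \<i> * (2 * pi - 2 * th) - 0 - Q 1) at_top"
    unfolding outer_def by (intro tendsto_intros exp_outer_arc_integral_tendsto th)
  then have "((\<lambda>b. \<i> * (2 * pi - 2 * th) - outer b - Q 1) \<longlongrightarrow> \<i> * (2 * pi - 2 * th) - Q 1) at_top"
    by simp
  then have "((\<lambda>b. integral {1..b} (ray th) - integral {1..b} (ray (-th)))
               \<longlongrightarrow> \<i> * (2 * pi - 2 * th) - Q 1) at_top"
    by (rule Lim_transform_eventually)
       (use eventually_ge_at_top[of 1] in \<open>eventually_elim, simp add: finite_rays outer\<close>)
  then show ?thesis
    using tendsto_unique[OF _ tendsto_diff[OF ray_tendsto ray_tendsto]] unfolding ray_def Q_def by simp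
qed
end

lemma hankel_integral_exp_div:
  assumes th: "pi / 2 < th" "th < pi"
  shows "hankel_integral (*) th (\<lambda>z. exp z / z) = 2 * complex_of_real pi * \<i>"
proof -
  obtain P where P: "\<And>z. (P has_field_derivative exprel z) (at z)"
    using exprel_primitive by metis
  define ray where "ray ph = integral {1..}
      (\<lambda>r. cis ph * (exp (complex_of_real r * cis ph) / (complex_of_real r * cis ph)))" for ph
  define arc where "arc = integral {-th..th} (\<lambda>s. \<i> * cis s * (exp (cis s) / cis s))"
  have arc: "arc = P (cis th) - P (cis (-th)) + 2 * th * \<i>"
    using integral_unique[OF exp_arc_has_integral[OF P, of "-th" th 1]] th pi_gt_zero
    unfolding arc_def by (simp add: algebra_simps)
  have rays: "ray th - ray (-th) = \<i> * (2 * pi - 2 * th) - (P (cis th) - P (cis (-th)))"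
    unfolding ray_def by (rule exp_div_rays_integral[OF P th])
  have "hankel_integral (*) th (\<lambda>z. exp z / z) = (ray th - ray (-th)) + arc"
    unfolding hankel_integral_def ray_def arc_def by simp
  also have "\<dots> = 2 * complex_of_real pi * \<i>"
    unfolding rays arc by (simp add: algebra_simps)
  finally show ?thesis .
qed

locale linear_operator = complex_space sc for sc :: "complex \<Rightarrow> 'a::banach \<Rightarrow> 'a" +
  fixes D :: "'a set" and A :: "'a \<Rightarrow> 'a"
  assumes lin_op: "lin_op sc D A"
begin

lemma domain_add: "x \<in> D \<Longrightarrow> y \<in> D \<Longrightarrow> x + y \<in> D"
  and domain_scale: "x \<in> D \<Longrightarrow> sc c x \<in> D"
  and op_add: "x \<in> D \<Longrightarrow> y \<in> D \<Longrightarrow> A (x + y) = A x + A y"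
  and op_scale: "x \<in> D \<Longrightarrow> A (sc c x) = sc c (A x)"
  using lin_op unfolding lin_op_def by auto

abbreviation "R \<equiv> resolvent sc D A"

context
  fixes l :: complex
  assumes l: "in_resolvent_set sc D A l"
begin

lemma resolvent_solves: "R l y \<in> D \<and> sc l (R l y) - A (R l y) = y"
proof -
  have "\<exists>!x. x \<in> D \<and> sc l x - A x = y" using l unfolding in_resolvent_set_def by auto
  then show ?thesis unfolding resolvent_def by (rule theI')
qed

lemma resolvent_eqI: "x \<in> D \<Longrightarrow> sc l x - A x = y \<Longrightarrow> R l y = x"
  using l unfolding in_resolvent_set_def resolvent_def by (intro the1_equality) auto

lemma resolvent_add: "R l (y + z) = R l y + R l z"
proof (rule resolvent_eqI)
  show "R l y + R l z \<in> D" using resolvent_solves domain_add by blast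
  show "sc l (R l y + R l z) - A (R l y + R l z) = y + z"
    using resolvent_solves[of y] resolvent_solves[of z]
    by (simp add: op_add scale.add_right algebra_simps)
qed

lemma resolvent_diff: "R l (y - z) = R l y - R l z"
  using resolvent_add[of "y - z" z] by simp

lemma resolvent_scale: "R l (sc c y) = sc c (R l y)"
proof (rule resolvent_eqI)
  show "sc c (R l y) \<in> D" using resolvent_solves domain_scale by blast
  have "sc l (sc c (R l y)) = sc c (sc l (R l y))" by (simp add: scale_scale mult.commute)
  then show "sc l (sc c (R l y)) - A (sc c (R l y)) = sc c y"
    using resolvent_solves[of y] by (simp add: op_scale scale.diff_right[symmetric])
qed

lemma resolvent_op: "d \<in> D \<Longrightarrow> R l (A d) = sc l (R l d) - d"
proof -
  assume d: "d \<in> D"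
  have "R l (sc l d - A d) = d" using d by (rule resolvent_eqI) simp
  then have "sc l (R l d) - R l (A d) = d" by (simp add: resolvent_diff resolvent_scale)
  then show ?thesis by (simp add: algebra_simps)
qed

end

lemma resolvent_identity:
  assumes l: "in_resolvent_set sc D A l" and m: "in_resolvent_set sc D A m"
  shows "R l y - R m y = sc (m - l) (R l (R m y))"
proof -
  define x where "x = R m y"
  have x: "x \<in> D" "sc m x - A x = y" using resolvent_solves[OF m, of y] by (auto simp: x_def)
  have "sc l x - A x = y + sc (l - m) x"
    using x(2) by (simp add: scale.diff_left algebra_simps)
  then have "R l (y + sc (l - m) x) = x" by (intro resolvent_eqI[OF l x(1)]) simp
  then have "R l y + sc (l - m) (R l x) = x" by (simp add: resolvent_add[OF l] resolvent_scale[OF l])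
  then show ?thesis unfolding x_def[symmetric]
    by (metis add_diff_cancel_left' minus_diff_eq scale.minus_left diff_minus_eq_add)
qed

lemma scale_resolvent_diff:
  assumes l: "in_resolvent_set sc D A l" and m: "in_resolvent_set sc D A m"
  shows "sc l (R l y) - sc m (R m y) = sc (l - m) (R l y) + sc m (sc (m - l) (R l (R m y)))"
proof -
  have "sc l (R l y) - sc m (R m y) = sc (l - m) (R l y) + sc m (R l y - R m y)"
    by (simp add: scale.diff_left scale.diff_right)
  then show ?thesis by (simp only: resolvent_identity[OF l m])
qed

end

text \<open>The angle \<open>om\<close> stands for \<open>th - \<epsilon>\<close> in condition (A)(iii); only \<open>al * th < om\<close> is
  needed, since \<open>\<mu> \<mapsto> s * \<mu> powr al\<close> maps \<^term>\<open>hankel_set th\<close> into \<^term>\<open>sector om\<close>.\<close>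

locale fractional_resolvent = linear_operator sc D A + hankel_contour sc th
  for sc :: "complex \<Rightarrow> 'a::banach \<Rightarrow> 'a" and D A th +
  fixes al om C :: real
  assumes al_pos: "0 < al" and al_lt_1: "al < 1" and om_gt: "al * th < om"
    and sector_resolvent: "\<And>l. l \<in> sector om \<Longrightarrow> in_resolvent_set sc D A l"
    and C_nonneg: "0 \<le> C"
    and norm_resolvent_le:
      "\<And>l y. l \<in> sector om \<Longrightarrow> norm (resolvent sc D A l y) \<le> C / cmod l * norm y"
    and dense_domain: "densely_defined D"
begin

lemmas hankel_pointD = hankel_setD[OF _ th_pos th_lt]

lemma powr_in_sector:
  assumes \<mu>: "\<mu> \<in> hankel_set th" and s: "0 < s"
  shows "complex_of_real s * \<mu> powr complex_of_real al \<in> sector om"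
proof -
  have eq: "complex_of_real s * \<mu> powr complex_of_real al
      = exp (complex_of_real (ln s) + complex_of_real al * Ln \<mu>)"
    using hankel_pointD(1)[OF \<mu>] s by (simp add: powr_def exp_add exp_of_real)
  have arg_le: "\<bar>al * Arg \<mu>\<bar> \<le> al * th"
    using hankel_pointD(3)[OF \<mu>] al_pos by (simp add: abs_mult mult_left_mono)
  have "al * th < pi"
    using mult_strict_right_mono[OF al_lt_1 th_pos] th_lt by simp
  then have "Arg (complex_of_real s * \<mu> powr complex_of_real al) = al * Arg \<mu>"
    unfolding eq using arg_le hankel_pointD(1)[OF \<mu>] by (subst Arg_exp) (auto simp: Arg_eq_Im_Ln)
  then show ?thesis
    unfolding sector_def using arg_le om_gt hankel_pointD(1)[OF \<mu>] s by (auto simp: powr_def)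
qed

lemma norm_scale_resolvent_le:
  assumes "l \<in> sector om"
  shows "norm (sc l (R l a)) \<le> C * norm a"
proof -
  have "l \<noteq> 0" using assms unfolding sector_def by simp
  then show ?thesis
    using mult_left_mono[OF norm_resolvent_le[OF assms, of a], of "cmod l"]
    by (simp add: norm_scale)
qed

lemma norm_scale_resolvent_sub_le:
  assumes "l \<in> sector om" and "d \<in> D"
  shows "norm (sc l (R l d) - d) \<le> C / cmod l * norm (A d)"
  using resolvent_op[OF sector_resolvent[OF assms(1)] assms(2)] norm_resolvent_le[OF assms(1), of "A d"]
  by simp

lemma norm_scale_resolvent_diff_le:
  assumes s: "0 < s" "0 < s'"
    and sector: "complex_of_real s * w \<in> sector om" "complex_of_real s' * w \<in> sector om"
  shows "norm (sc (complex_of_real s * w) (R (complex_of_real s * w) a)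
               - sc (complex_of_real s' * w) (R (complex_of_real s' * w) a))
         \<le> \<bar>s - s'\<bar> * ((C + C^2) * norm a) / s"
proof -
  define l where "l = complex_of_real s * w"
  define m where "m = complex_of_real s' * w"
  have "l \<noteq> 0" using sector(1) unfolding sector_def l_def by simp
  then have w: "0 < cmod w" by (simp add: l_def)
  have norm_l: "cmod l = s * cmod w" and norm_m: "cmod m = s' * cmod w"
    and norm_lm: "cmod (l - m) = \<bar>s - s'\<bar> * cmod w" and norm_ml: "cmod (m - l) = \<bar>s - s'\<bar> * cmod w"
    using s by (simp_all add: l_def m_def norm_mult abs_minus_commute flip: left_diff_distrib of_real_diff)
  have Rl_le: "cmod l * norm (R l y) \<le> C * norm y" for y
    using norm_scale_resolvent_le[OF sector(1)[folded l_def]] by (simp add: norm_scale)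
  have Rm_le: "cmod m * norm (R m y) \<le> C * norm y" for y
    using norm_scale_resolvent_le[OF sector(2)[folded m_def]] by (simp add: norm_scale)
  have "norm (sc (l - m) (R l a)) = \<bar>s - s'\<bar> / s * (cmod l * norm (R l a))"
    using s by (simp add: norm_scale norm_lm norm_l)
  also have "\<dots> \<le> \<bar>s - s'\<bar> / s * (C * norm a)"
    using s by (intro mult_left_mono Rl_le) auto
  finally have first: "norm (sc (l - m) (R l a)) \<le> \<bar>s - s'\<bar> * (C * norm a) / s" by simp
  have "cmod l * (cmod m * norm (R l (R m a))) \<le> cmod m * (C * norm (R m a))"
    using mult_left_mono[OF Rl_le[of "R m a"], of "cmod m"] by (simp add: mult_ac)
  also have "\<dots> \<le> C * (C * norm a)"
    using mult_left_mono[OF Rm_le[of a] C_nonneg] by (simp add: mult_ac)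
  finally have "s * s' * cmod w ^ 2 * norm (R l (R m a)) \<le> C^2 * norm a"
    by (simp add: norm_l norm_m power2_eq_square mult_ac)
  then have "\<bar>s - s'\<bar> / s * (s * s' * cmod w ^ 2 * norm (R l (R m a))) \<le> \<bar>s - s'\<bar> / s * (C^2 * norm a)"
    using s by (intro mult_left_mono) auto
  moreover have "norm (sc m (sc (m - l) (R l (R m a))))
      = \<bar>s - s'\<bar> / s * (s * s' * cmod w ^ 2 * norm (R l (R m a)))"
    using s by (simp add: norm_scale norm_m norm_ml power2_eq_square)
  ultimately have second: "norm (sc m (sc (m - l) (R l (R m a)))) \<le> \<bar>s - s'\<bar> * (C^2 * norm a) / s"
    by simp
  have "norm (sc l (R l a) - sc m (R m a)) \<le> \<bar>s - s'\<bar> * (C * norm a) / s + \<bar>s - s'\<bar> * (C^2 * norm a) / s"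
    unfolding scale_resolvent_diff[OF sector_resolvent[OF sector(1)[folded l_def]] sector_resolvent[OF sector(2)[folded m_def]]]
    by (rule norm_triangle_le[OF add_mono[OF first second]])
  also have "\<dots> = \<bar>s - s'\<bar> * ((C + C^2) * norm a) / s" by (simp add: add_divide_distrib algebra_simps)
  finally show ?thesis unfolding l_def m_def .
qed

lemma resolvent_continuous_on: "continuous_on (sector om) (\<lambda>l. R l y)"
  unfolding continuous_on_def
proof
  fix l0 assume l0: "l0 \<in> sector om"
  have "l0 \<noteq> 0" using l0 unfolding sector_def by auto
  define K where "K l = cmod (l0 - l) * (C / cmod l * (C / cmod l0 * norm y))" for l
  have "((\<lambda>l. R l y - R l0 y) \<longlongrightarrow> 0) (at l0 within sector om)"
  proof (rule Lim_null_comparison)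
    show "\<forall>\<^sub>F l in at l0 within sector om. norm (R l y - R l0 y) \<le> K l"
      unfolding eventually_at_filter
    proof (intro always_eventually allI impI)
      fix l assume l: "l \<in> sector om"
      have "norm (R l y - R l0 y) = cmod (l0 - l) * norm (R l (R l0 y))"
        using resolvent_identity[OF sector_resolvent[OF l] sector_resolvent[OF l0]]
        by (simp add: norm_scale)
      also have "norm (R l (R l0 y)) \<le> C / cmod l * (C / cmod l0 * norm y)"
        using norm_resolvent_le[OF l, of "R l0 y"] norm_resolvent_le[OF l0, of y] C_nonneg
        by (meson order_trans mult_left_mono divide_nonneg_nonneg norm_ge_zero)
      finally show "norm (R l y - R l0 y) \<le> K l"
        unfolding K_def by (simp add: mult_left_mono)
    qed
    have "(K \<longlongrightarrow> K l0) (at l0 within sector om)"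
      unfolding K_def using \<open>l0 \<noteq> 0\<close> by (intro tendsto_intros) auto
    then show "(K \<longlongrightarrow> 0) (at l0 within sector om)" by (simp add: K_def)
  qed
  then show "((\<lambda>l. R l y) \<longlongrightarrow> R l0 y) (at l0 within sector om)" by (rule LIM_zero_cancel)
qed

definition scaled_integrand :: "real \<Rightarrow> 'a \<Rightarrow> complex \<Rightarrow> 'a" where
  "scaled_integrand s a \<mu> =
     sc (exp \<mu> / \<mu>) (sc (complex_of_real s * \<mu> powr complex_of_real al)
       (R (complex_of_real s * \<mu> powr complex_of_real al) a))"

lemma norm_exp_div_le:
  assumes "\<mu> \<in> hankel_set th"
  shows "cmod (exp \<mu> / \<mu>) \<le> exp (Re \<mu>)"
proof -
  have "cmod (exp \<mu> / \<mu>) = exp (Re \<mu>) / cmod \<mu>" by (simp add: norm_divide)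
  also have "\<dots> \<le> exp (Re \<mu>) / 1" using hankel_pointD(2)[OF assms] by (intro divide_left_mono) auto
  finally show ?thesis by simp
qed

lemma norm_scaled_integrand_le:
  assumes "\<mu> \<in> hankel_set th" and "0 < s"
  shows "norm (scaled_integrand s a \<mu>) \<le> (C * norm a) * exp (Re \<mu>)"
  unfolding scaled_integrand_def norm_scale[of "exp \<mu> / \<mu>"]
  using mult_mono[OF norm_exp_div_le[OF assms(1)] norm_scale_resolvent_le[OF powr_in_sector[OF assms], of a]]
  by (simp add: mult.commute)

lemma scaled_integrand_diff:
  assumes "\<mu> \<in> hankel_set th" and "0 < s"
  shows "scaled_integrand s a \<mu> - scaled_integrand s b \<mu> = scaled_integrand s (a - b) \<mu>"
  unfolding scaled_integrand_def resolvent_diff[OF sector_resolvent[OF powr_in_sector[OF assms]]]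
  by (simp add: scale.diff_right)

lemma norm_scaled_integrand_diff_le:
  assumes \<mu>: "\<mu> \<in> hankel_set th" and s: "0 < s" "0 < s'"
  shows "norm (scaled_integrand s a \<mu> - scaled_integrand s' a \<mu>)
           \<le> (\<bar>s - s'\<bar> * ((C + C^2) * norm a) / s) * exp (Re \<mu>)"
proof -
  have "norm (scaled_integrand s a \<mu> - scaled_integrand s' a \<mu>)
      = cmod (exp \<mu> / \<mu>) * norm (sc (complex_of_real s * \<mu> powr complex_of_real al)
            (R (complex_of_real s * \<mu> powr complex_of_real al) a)
          - sc (complex_of_real s' * \<mu> powr complex_of_real al)
            (R (complex_of_real s' * \<mu> powr complex_of_real al) a))"
    unfolding scaled_integrand_def by (simp add: norm_scale flip: scale.diff_right)
  also have "\<dots> \<le> exp (Re \<mu>) * (\<bar>s - s'\<bar> * ((C + C^2) * norm a) / s)"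
    using s C_nonneg
    by (intro mult_mono norm_exp_div_le[OF \<mu>] norm_scale_resolvent_diff_le powr_in_sector[OF \<mu>]) auto
  finally show ?thesis by (simp add: mult.commute)
qed

lemma norm_scaled_integrand_sub_le:
  assumes \<mu>: "\<mu> \<in> hankel_set th" and s: "0 < s" and d: "d \<in> D"
  shows "norm (scaled_integrand s d \<mu> - sc (exp \<mu> / \<mu>) d) \<le> (C * norm (A d) / s) * exp (Re \<mu>)"
proof -
  define \<nu> where "\<nu> = complex_of_real s * \<mu> powr complex_of_real al"
  have \<nu>: "\<nu> \<in> sector om" unfolding \<nu>_def by (rule powr_in_sector[OF \<mu> s])
  have "s \<le> cmod \<nu>"
    using hankel_pointD(2)[OF \<mu>] s al_pos
    by (simp add: \<nu>_def norm_mult norm_powr_real_powr' ge_one_powr_ge_zero)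
  then have "C / cmod \<nu> * norm (A d) \<le> C * norm (A d) / s"
    using s C_nonneg by (simp add: frac_le mult_nonneg_nonneg)
  then have "norm (sc \<nu> (R \<nu> d) - d) \<le> C * norm (A d) / s"
    using norm_scale_resolvent_sub_le[OF \<nu> d] by linarith
  then have "cmod (exp \<mu> / \<mu>) * norm (sc \<nu> (R \<nu> d) - d) \<le> exp (Re \<mu>) * (C * norm (A d) / s)"
    by (intro mult_mono norm_exp_div_le[OF \<mu>]) auto
  then show ?thesis
    unfolding scaled_integrand_def \<nu>_def[symmetric] by (simp add: norm_scale mult.commute flip: scale.diff_right)
qed

lemma scaled_integrand_continuous_on:
  assumes s: "0 < s"
  shows "continuous_on (hankel_set th) (scaled_integrand s a)"
proof -
  have \<nu>: "continuous_on (hankel_set th) (\<lambda>\<mu>. complex_of_real s * \<mu> powr complex_of_real al)"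
    by (intro continuous_intros) (auto dest: hankel_pointD)
  have "continuous_on (hankel_set th) (\<lambda>\<mu>. R (complex_of_real s * \<mu> powr complex_of_real al) a)"
    using continuous_on_compose2[OF resolvent_continuous_on \<nu>] powr_in_sector[OF _ s] by blast
  then show ?thesis
    unfolding scaled_integrand_def[abs_def]
    by (intro scale.continuous_on \<nu>) (auto intro!: continuous_intros dest: hankel_pointD)
qed

lemma G_integrand_eq_scaled:
  assumes t: "0 < t" and l: "l \<noteq> 0"
  shows "G_integrand sc D A al t a l
           = sc (complex_of_real t) (scaled_integrand (t powr -al) a (complex_of_real t * l))"
proof -
  define w where "w = complex_of_real t * l"
  have "w powr complex_of_real al = complex_of_real (t powr al) * l powr complex_of_real al"
    using t by (simp add: w_def powr_times_real_left powr_of_real)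
  then have \<nu>: "complex_of_real (t powr -al) * w powr complex_of_real al = l powr complex_of_real al"
    using t by (simp add: powr_minus)
  have "sc (complex_of_real t) (scaled_integrand (t powr -al) a w)
      = sc (complex_of_real t * (exp w / w * l powr complex_of_real al)) (R (l powr complex_of_real al) a)"
    unfolding scaled_integrand_def \<nu> by (simp only: scale_scale)
  also have "complex_of_real t * (exp w / w * l powr complex_of_real al)
      = exp (l * complex_of_real t) * l powr (complex_of_real al - 1)"
  proof -
    have "l powr (complex_of_real al - 1) = l powr complex_of_real al / l"
      using l by (simp add: powr_def left_diff_distrib exp_diff)
    then show ?thesis using t l by (simp add: w_def field_simps)
  qed
  finally show ?thesis by (simp add: G_integrand_def w_def)
qed

lemma G_op_ray_integral_eq:
  assumes t: "0 < t" and ph: "ph = th \<or> ph = -th"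
  shows "integral {1/t..} (\<lambda>r. sc (cis ph) (G_integrand sc D A al t a (complex_of_real r * cis ph)))
           = integral {1..} (\<lambda>r. sc (cis ph) (scaled_integrand (t powr -al) a (complex_of_real r * cis ph)))"
proof -
  define s where "s = t powr -al"
  have s: "0 < s" using t by (simp add: s_def)
  have c: "0 < - cos th" using cos_th_neg by simp
  note decay = hankel_ray_decay[OF scaled_integrand_continuous_on[OF s] norm_scaled_integrand_le[OF _ s] ph]
  have "integral {1..} (\<lambda>r. sc (cis ph) (scaled_integrand s a (complex_of_real r * cis ph)))
     = integral {1/t..} (\<lambda>x. t *\<^sub>R sc (cis ph) (scaled_integrand s a (complex_of_real (t * x) * cis ph)))"
    by (rule ray_integral_stretch[OF decay(1) c t decay(2)])
  also have "\<dots> = integral {1/t..} (\<lambda>r. sc (cis ph) (G_integrand sc D A al t a (complex_of_real r * cis ph)))"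
  proof (rule integral_cong)
    fix x assume "x \<in> {1/t..}"
    then have "0 < x" using t by (auto intro: less_le_trans[of 0 "1/t"])
    then have "G_integrand sc D A al t a (complex_of_real x * cis ph)
        = sc (complex_of_real t) (scaled_integrand s a (complex_of_real (t * x) * cis ph))"
      using G_integrand_eq_scaled[OF t, of "complex_of_real x * cis ph" a] by (simp add: s_def mult.assoc)
    then show "t *\<^sub>R sc (cis ph) (scaled_integrand s a (complex_of_real (t * x) * cis ph)) =
        sc (cis ph) (G_integrand sc D A al t a (complex_of_real x * cis ph))"
      by (simp add: scale_scale mult.commute flip: scale_of_real)
  qed
  finally show ?thesis by (simp add: s_def)
qed

lemma G_op_eq_hankel_integral:
  assumes t: "0 < t"
  shows "G_op sc D A al th t a
           = sc (1 / (2 * complex_of_real pi * \<i>)) (hankel_integral sc th (scaled_integrand (t powr -al) a))"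
proof -
  have arc: "integral {-th..th} (\<lambda>u. sc (\<i> * complex_of_real (1 / t) * cis u)
        (G_integrand sc D A al t a (complex_of_real (1 / t) * cis u)))
      = integral {-th..th} (\<lambda>u. sc (\<i> * cis u) (scaled_integrand (t powr -al) a (cis u)))"
  proof (rule integral_cong)
    fix u :: real
    show "sc (\<i> * complex_of_real (1 / t) * cis u) (G_integrand sc D A al t a (complex_of_real (1 / t) * cis u))
       = sc (\<i> * cis u) (scaled_integrand (t powr -al) a (cis u))"
      using G_integrand_eq_scaled[OF t, of "complex_of_real (1 / t) * cis u" a] t by (simp add: scale_scale)
  qed
  show ?thesis
    unfolding G_op_def hankel_integral_def
    using t G_op_ray_integral_eq[OF t disjI1[OF refl]] G_op_ray_integral_eq[OF t disjI2[OF refl]] arc by simp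
qed

lemma norm_scale_inv_2pi_i: "norm (sc (1 / (2 * complex_of_real pi * \<i>)) x) = norm x / (2 * pi)"
  by (simp add: norm_scale norm_divide norm_mult)

lemma hankel_integral_exp_div_scale:
  "sc (1 / (2 * complex_of_real pi * \<i>)) (hankel_integral sc th (\<lambda>\<mu>. sc (exp \<mu> / \<mu>) d)) = d"
proof -
  have "continuous_on (hankel_set th) (\<lambda>\<mu>. exp \<mu> / \<mu>)"
    by (intro continuous_intros) (auto dest: hankel_pointD)
  then have "hankel_integral sc th (\<lambda>\<mu>. sc (exp \<mu> / \<mu>) d) = sc (2 * complex_of_real pi * \<i>) d"
    using hankel_integral_scale_const[of "\<lambda>\<mu>. exp \<mu> / \<mu>" 1 d] norm_exp_div_le
      hankel_integral_exp_div[OF th_gt th_lt]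
    by simp
  then show ?thesis by (simp add: scale_scale scale_one)
qed

lemma norm_G_op_diff_le:
  assumes t: "0 < t"
  shows "norm (G_op sc D A al th t a - G_op sc D A al th t b)
           \<le> C * norm (a - b) * hankel_const th / (2 * pi)"
proof -
  define s where "s = t powr -al"
  have s: "0 < s" using t by (simp add: s_def)
  have "norm (hankel_integral sc th (scaled_integrand s a) - hankel_integral sc th (scaled_integrand s b))
      \<le> C * norm (a - b) * hankel_const th"
    using scaled_integrand_continuous_on[OF s] norm_scaled_integrand_le[OF _ s]
    by (intro norm_hankel_integral_diff_le) (auto simp: scaled_integrand_diff s)
  then show ?thesis
    unfolding G_op_eq_hankel_integral[OF t] s_def[symmetric]
    by (simp add: norm_scale_inv_2pi_i divide_right_mono flip: scale.diff_right)
qed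

lemma norm_G_op_sub_le:
  assumes t: "0 < t" and d: "d \<in> D"
  shows "norm (G_op sc D A al th t d - d) \<le> C * norm (A d) * hankel_const th / (2 * pi) * t powr al"
proof -
  define s where "s = t powr -al"
  have s: "0 < s" using t by (simp add: s_def)
  have "G_op sc D A al th t d - d = sc (1 / (2 * complex_of_real pi * \<i>))
      (hankel_integral sc th (scaled_integrand s d) - hankel_integral sc th (\<lambda>\<mu>. sc (exp \<mu> / \<mu>) d))"
    unfolding scale.diff_right G_op_eq_hankel_integral[OF t] hankel_integral_exp_div_scale s_def ..
  also have "norm \<dots> \<le> (C * norm (A d) / s) * hankel_const th / (2 * pi)"
    unfolding norm_scale_inv_2pi_i
  proof (intro divide_right_mono norm_hankel_integral_diff_le)
    show "continuous_on (hankel_set th) (\<lambda>\<mu>. sc (exp \<mu> / \<mu>) d)"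
      by (intro continuous_intros scale.continuous_on) (auto dest: hankel_pointD)
    show "norm (sc (exp \<mu> / \<mu>) d) \<le> norm d * exp (Re \<mu>)" if "\<mu> \<in> hankel_set th" for \<mu>
      using norm_exp_div_le[OF that] by (simp add: norm_scale mult.commute mult_left_mono)
  qed (use scaled_integrand_continuous_on[OF s] norm_scaled_integrand_le[OF _ s]
         norm_scaled_integrand_sub_le[OF _ s d] in auto)
  also have "\<dots> = C * norm (A d) * hankel_const th / (2 * pi) * t powr al"
    using t by (simp add: s_def powr_minus_divide)
  finally show ?thesis .
qed

lemma norm_G_op_time_diff_le:
  assumes t: "0 < t" and t': "0 < t'"
  shows "norm (G_op sc D A al th t' a - G_op sc D A al th t a)
           \<le> \<bar>t powr -al - t' powr -al\<bar> * ((C + C^2) * norm a / t powr -al * hankel_const th / (2 * pi))"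
proof -
  define s where "s = t powr -al"
  define s' where "s' = t' powr -al"
  have s: "0 < s" "0 < s'" using t t' by (simp_all add: s_def s'_def)
  have "norm (hankel_integral sc th (scaled_integrand s a) - hankel_integral sc th (scaled_integrand s' a))
      \<le> (\<bar>s - s'\<bar> * ((C + C^2) * norm a) / s) * hankel_const th"
    using scaled_integrand_continuous_on norm_scaled_integrand_le norm_scaled_integrand_diff_le s
    by (intro norm_hankel_integral_diff_le) auto
  then have "norm (hankel_integral sc th (scaled_integrand s a) - hankel_integral sc th (scaled_integrand s' a))
      / (2 * pi) \<le> (\<bar>s - s'\<bar> * ((C + C^2) * norm a) / s) * hankel_const th / (2 * pi)"
    by (rule divide_right_mono) simp
  then show ?thesis
    unfolding G_op_eq_hankel_integral[OF t] G_op_eq_hankel_integral[OF t'] s_def[symmetric] s'_def[symmetric]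
      scale.diff_right[symmetric] norm_scale_inv_2pi_i
    by (simp add: norm_minus_commute)
qed

lemma G_op_tendsto_pos:
  assumes t: "0 < t"
  shows "((\<lambda>t'. norm (G_op sc D A al th t' a - G_op sc D A al th t a)) \<longlongrightarrow> 0) (at t within S)"
proof (rule Lim_null_comparison)
  define K where "K = (C + C^2) * norm a / t powr -al * hankel_const th / (2 * pi)"
  show "\<forall>\<^sub>F t' in at t within S.
      norm (norm (G_op sc D A al th t' a - G_op sc D A al th t a)) \<le> \<bar>t powr -al - t' powr -al\<bar> * K"
    using order_tendstoD(1)[OF tendsto_ident_at t]
  proof eventually_elim
    case (elim t')
    show ?case unfolding K_def using norm_G_op_time_diff_le[OF t elim] by simp
  qed
  have "((\<lambda>t'. \<bar>t powr -al - t' powr -al\<bar> * K) \<longlongrightarrow> \<bar>t powr -al - t powr -al\<bar> * K) (at t within S)"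
    using t by (intro tendsto_intros) auto
  then show "((\<lambda>t'. \<bar>t powr -al - t' powr -al\<bar> * K) \<longlongrightarrow> 0) (at t within S)" by simp
qed

lemma norm_G_op_sub_le_approx:
  assumes t: "0 < t" and d: "d \<in> D"
  shows "norm (G_op sc D A al th t a - a)
           \<le> (C * hankel_const th / (2 * pi) + 1) * norm (a - d)
             + C * norm (A d) * hankel_const th / (2 * pi) * t powr al"
proof -
  have "norm (G_op sc D A al th t a - a)
      \<le> norm (G_op sc D A al th t a - G_op sc D A al th t d) + norm (G_op sc D A al th t d - d) + norm (d - a)"
    using norm_triangle_ineq[of "G_op sc D A al th t a - G_op sc D A al th t d + (G_op sc D A al th t d - d)" "d - a"]
      norm_triangle_ineq[of "G_op sc D A al th t a - G_op sc D A al th t d" "G_op sc D A al th t d - d"]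
    by simp
  also have "\<dots> \<le> C * norm (a - d) * hankel_const th / (2 * pi)
      + C * norm (A d) * hankel_const th / (2 * pi) * t powr al + norm (a - d)"
    using norm_G_op_diff_le[OF t, of a d] norm_G_op_sub_le[OF t d]
    by (intro add_mono) (simp_all add: norm_minus_commute)
  finally show ?thesis by (simp add: field_simps)
qed

lemma G_op_tendsto_0:
  assumes T: "0 < T"
  shows "((\<lambda>t'. norm (G_op sc D A al th t' a - G_op sc D A al th 0 a)) \<longlongrightarrow> 0) (at 0 within {0..T})"
proof -
  define K where "K = C * hankel_const th / (2 * pi) + 1"
  have "0 \<le> C * hankel_const th / (2 * pi)" using C_nonneg hankel_const_nonneg by simp
  then have K: "0 < K" unfolding K_def by linarith
  have "((\<lambda>t'. norm (G_op sc D A al th t' a - a)) \<longlongrightarrow> 0) (at_right 0)"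
  proof (rule tendstoI)
    fix e :: real assume e: "0 < e"
    have "a \<in> closure D" using dense_domain unfolding densely_defined_def by simp
    then obtain d where d: "d \<in> D" "dist d a < e / (2 * K)"
      using e K unfolding closure_approachable by (metis divide_pos_pos mult_pos_pos zero_less_numeral)
    have approx: "K * norm (a - d) < e / 2"
      using d(2) K by (simp add: dist_norm norm_minus_commute field_simps)
    have "((\<lambda>t'. C * norm (A d) * hankel_const th / (2 * pi) * t' powr al) \<longlongrightarrow> 0) (at_right 0)"
      using al_pos by real_asymp
    then have "\<forall>\<^sub>F t' in at_right 0. C * norm (A d) * hankel_const th / (2 * pi) * t' powr al < e / 2"
      using e by (intro order_tendstoD(2)) auto
    then show "\<forall>\<^sub>F t' in at_right 0. dist (norm (G_op sc D A al th t' a - a)) 0 < e"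
      using eventually_at_right_less[of 0]
    proof eventually_elim
      case (elim t')
      have "norm (G_op sc D A al th t' a - a) < e"
        using norm_G_op_sub_le_approx[OF elim(2) d(1), of a] approx elim(1) unfolding K_def by linarith
      then show ?case by simp
    qed
  qed
  then show ?thesis unfolding at_within_Icc_at_right[OF T] by (simp add: G_op_def)
qed

end

theorem proposition4p1:
  fixes sc :: "complex \<Rightarrow> 'a::banach \<Rightarrow> 'a"
    and D :: "'a set" and A :: "'a \<Rightarrow> 'a"
    and al th T :: real
  assumes "complex_scaling sc"
    and "0 < al" and "al < 1" and "0 < T"
    and "condition_A sc D A th"
    and "0 \<le> t" and "t \<le> T"
  shows "((\<lambda>t'. norm (G_op sc D A al th t' a - G_op sc D A al th t a)) \<longlongrightarrow> 0)
           (at t within {0..T})"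
proof -
  define e where "e = th * (1 - al) / 2"
  note A = assms(5)[unfolded condition_A_def]
  have th: "0 < th" using A pi_gt_zero by linarith
  then have e: "0 < e" "e < th" using assms(2,3) by (simp_all add: e_def)
  then obtain C where C: "\<And>l y. l \<in> sector (th - e) \<Longrightarrow> norm (resolvent sc D A l y) \<le> C / cmod l * norm y"
    using A by blast
  have "sector (th - e) \<subseteq> sector th" using e unfolding sector_def by auto
  then interpret fractional_resolvent sc D A th al "th - e" "max C 0"
  proof unfold_locales
    show "al * th < th - e" using th assms(3) by (simp add: e_def field_simps)
    fix l :: complex and y :: 'a
    assume "l \<in> sector (th - e)"
    moreover have "C / cmod l * norm y \<le> max C 0 / cmod l * norm y"
      by (intro mult_right_mono divide_right_mono) auto
    ultimately show "norm (resolvent sc D A l y) \<le> max C 0 / cmod l * norm y"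
      using C by (meson order_trans)
  qed (use assms A in auto)
  show ?thesis
    using G_op_tendsto_0[OF assms(4)] G_op_tendsto_pos assms(6) by (cases "t = 0") auto
qed

end
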